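(* Let $F$ be a finite, positive integral frieze pattern of width $N$ and let $T$ be the triangulation of $P_N$ with $F=F_T$. Then: (1) the principal growth coefficient of $F$ is $-2$ if and only if $T$ has no nontrivial rotational symmetry; (2) the principal growth coefficient of $F$ is $0$ if and only if $T$ has $2$-fold rotational symmetry; (3) the principal growth coefficient of $F$ is $1$ if and only if $T$ has $3$-fold rotational symmetry.
   Context: $P_N$ is a convex polygon with vertices $v_0,\ldots,v_{N-1}$ clockwise, indices mod $N$. For a triangulation $T$ of $P_N$ let $a_i$ be the number of triangles of $T$ incident to $v_{i\bmod N}$; $F_T$ is defined for all $j\ge i$ by $F_T(i,i)=0$, $F_T(i,i+1)=1$, $F_T(i,j+1)=a_jF_T(i,j)-F_T(i,j-1)$. A finite positive integral frieze pattern of width $N$ is a function $F$ on $\{0\le j-i\le N\}$ with $F(i,i)=F(i,i+N)=0$, $F(i,i+1)=F(i,i+N-1)=1$, $F(i,j)F(i+1,j+1)-F(i+1,j)F(i,j+1)=1$ whenever defined, and positive integer entries for $0<j-i<N$; it is a known fact that every such $F$ equals the restriction of $F_T$ to $0\le j-i\le N$ for a unique triangulation $T$, and $F_T$ (defined for all $j\ge i$) is its unique tame extension to an infinite frieze pattern. The principal growth coefficient of $F$ is $F_T(i,i+p+1)-F_T(i+1,i+p)$ (independent of $i$), where $p$ is the minimal period of the quiddity row $(a_i)$. $T$ has $k$-fold rotational symmetry if $k\mid N$ and $T$ is invariant under the rotation $v_i\mapsto v_{i+N/k}$. *)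

theory Defs
  imports Main
begin

text \<open>Convex N-gon with vertices 0..N-1 (clockwise). A diagonal/side is
  represented as an ordered pair (x,y) with x < y.\<close>

definition is_side :: "nat \<Rightarrow> nat \<Rightarrow> nat \<Rightarrow> bool" where
  "is_side N x y \<longleftrightarrow> x < y \<and> y < N \<and> (y = x + 1 \<or> (x = 0 \<and> y = N - 1))"

definition is_diag :: "nat \<Rightarrow> nat \<Rightarrow> nat \<Rightarrow> bool" where
  "is_diag N x y \<longleftrightarrow> x < y \<and> y < N \<and> \<not> is_side N x y"

definition crosses :: "nat \<times> nat \<Rightarrow> nat \<times> nat \<Rightarrow> bool" where
  "crosses d e \<longleftrightarrow> (case d of (x, y) \<Rightarrow> case e of (u, v) \<Rightarrow>
     (x < u \<and> u < y \<and> y < v) \<or> (u < x \<and> x < v \<and> v < y))"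

definition noncrossing_diags :: "nat \<Rightarrow> (nat \<times> nat) set \<Rightarrow> bool" where
  "noncrossing_diags N D \<longleftrightarrow>
     (\<forall>(x, y) \<in> D. is_diag N x y) \<and> (\<forall>d \<in> D. \<forall>e \<in> D. \<not> crosses d e)"

definition triangulation :: "nat \<Rightarrow> (nat \<times> nat) set \<Rightarrow> bool" where
  "triangulation N T \<longleftrightarrow> 3 \<le> N \<and> noncrossing_diags N T \<and>
     (\<forall>D. noncrossing_diags N D \<and> T \<subseteq> D \<longrightarrow> D = T)"

definition is_edge :: "nat \<Rightarrow> (nat \<times> nat) set \<Rightarrow> nat \<Rightarrow> nat \<Rightarrow> bool" where
  "is_edge N T x y \<longleftrightarrow> is_side N x y \<or> (x, y) \<in> T"

definition triangles :: "nat \<Rightarrow> (nat \<times> nat) set \<Rightarrow> (nat \<times> nat \<times> nat) set" where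
  "triangles N T = {(a, b, c). a < b \<and> b < c \<and> is_edge N T a b \<and> is_edge N T b c \<and> is_edge N T a c}"

definition quiddity :: "nat \<Rightarrow> (nat \<times> nat) set \<Rightarrow> int \<Rightarrow> int" where
  "quiddity N T i = int (card {(a, b, c) \<in> triangles N T. nat (i mod int N) \<in> {a, b, c}})"

fun FT_aux :: "(int \<Rightarrow> int) \<Rightarrow> int \<Rightarrow> nat \<Rightarrow> int" where
  "FT_aux a i 0 = 0"
| "FT_aux a i (Suc 0) = 1"
| "FT_aux a i (Suc (Suc k)) = a (i + int k + 1) * FT_aux a i (Suc k) - FT_aux a i k"

definition FT :: "nat \<Rightarrow> (nat \<times> nat) set \<Rightarrow> int \<Rightarrow> int \<Rightarrow> int" where
  "FT N T i j = FT_aux (quiddity N T) i (nat (j - i))"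

definition min_period :: "(int \<Rightarrow> int) \<Rightarrow> nat" where
  "min_period a = (LEAST p::nat. 0 < p \<and> (\<forall>i. a (i + int p) = a i))"

text \<open>Principal growth coefficient F_T(i,i+p+1) - F_T(i+1,i+p), evaluated at i = 0.\<close>
definition pgc :: "nat \<Rightarrow> (nat \<times> nat) set \<Rightarrow> int" where
  "pgc N T = (let p = int (min_period (quiddity N T)) in FT N T 0 (p + 1) - FT N T 1 p)"

definition rotate :: "nat \<Rightarrow> nat \<Rightarrow> nat \<times> nat \<Rightarrow> nat \<times> nat" where
  "rotate N s d = (case d of (x, y) \<Rightarrow>
     (min ((x + s) mod N) ((y + s) mod N), max ((x + s) mod N) ((y + s) mod N)))"

definition has_kfold_symmetry :: "nat \<Rightarrow> (nat \<times> nat) set \<Rightarrow> nat \<Rightarrow> bool" where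
  "has_kfold_symmetry N T k \<longleftrightarrow> k dvd N \<and> rotate N (N div k) ` T = T"

definition frieze_pattern :: "nat \<Rightarrow> (int \<Rightarrow> int \<Rightarrow> int) \<Rightarrow> bool" where
  "frieze_pattern N F \<longleftrightarrow>
     (\<forall>i. F i i = 0 \<and> F i (i + int N) = 0 \<and> F i (i + 1) = 1 \<and> F i (i + int N - 1) = 1) \<and>
     (\<forall>i j. i + 1 \<le> j \<and> j + 1 \<le> i + int N \<longrightarrow>
        F i j * F (i + 1) (j + 1) - F (i + 1) j * F i (j + 1) = 1) \<and>
     (\<forall>i j. 0 < j - i \<and> j - i < int N \<longrightarrow> 0 < F i j)"

end

(*
  A triangulation is determined by its quiddity sequence: a vertex lying in a single triangle is
  an ear, cutting it off lowers every count predictably, and induction on the number of vertices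
  applies. Rotating T rotates its quiddity sequence, so T has k-fold symmetry iff N/k is a period
  of the quiddities, i.e. iff k divides m = N/p for the minimal period p.

  The rows F(0, n) and F(1, n) span the solutions of x(n+2) = a(n+1) x(n+1) - x(n); shifting by p
  acts on this plane with determinant 1 and trace the growth coefficient t, so c(j) = F(0, j p)
  satisfies c(j+2) = t c(j+1) - c(j). As c(0) = c(m) = 0 and c(j) > 0 in between, either m = 1
  (and t = -2 directly), or m = 2 and t = 0, or m = 3 and t = 1.
*)

theory Submission
  imports Defs
begin

section \<open>Triangulations of a convex polygon with an arbitrary vertex set\<close>

text \<open>The vertices V are listed in increasing order around the polygon, so sides join consecutive
  vertices or Min V and Max V. General vertex sets are needed to cut off ears.\<close>

definition adjacent :: "nat set \<Rightarrow> nat \<Rightarrow> nat \<Rightarrow> bool" where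
  "adjacent V x y \<longleftrightarrow> x \<in> V \<and> y \<in> V \<and> x < y \<and> (\<forall>z\<in>V. \<not> (x < z \<and> z < y))"

definition polygon_side :: "nat set \<Rightarrow> nat \<Rightarrow> nat \<Rightarrow> bool" where
  "polygon_side V x y \<longleftrightarrow> adjacent V x y \<or> (x \<in> V \<and> y \<in> V \<and> x < y \<and> V \<subseteq> {x..y})"

definition polygon_diag :: "nat set \<Rightarrow> nat \<Rightarrow> nat \<Rightarrow> bool" where
  "polygon_diag V x y \<longleftrightarrow> x \<in> V \<and> y \<in> V \<and> x < y \<and> \<not> polygon_side V x y"

definition polygon_noncrossing :: "nat set \<Rightarrow> (nat \<times> nat) set \<Rightarrow> bool" where
  "polygon_noncrossing V D \<longleftrightarrow>
     (\<forall>(x, y) \<in> D. polygon_diag V x y) \<and> (\<forall>d \<in> D. \<forall>e \<in> D. \<not> crosses d e)"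

definition polygon_triangulation :: "nat set \<Rightarrow> (nat \<times> nat) set \<Rightarrow> bool" where
  "polygon_triangulation V T \<longleftrightarrow> finite V \<and> 3 \<le> card V \<and> polygon_noncrossing V T \<and>
     (\<forall>D. polygon_noncrossing V D \<and> T \<subseteq> D \<longrightarrow> D = T)"

definition polygon_edge :: "nat set \<Rightarrow> (nat \<times> nat) set \<Rightarrow> nat \<Rightarrow> nat \<Rightarrow> bool" where
  "polygon_edge V T x y \<longleftrightarrow> polygon_side V x y \<or> (x, y) \<in> T"

definition polygon_triangles :: "nat set \<Rightarrow> (nat \<times> nat) set \<Rightarrow> (nat \<times> nat \<times> nat) set" where
  "polygon_triangles V T = {(a, b, c). a < b \<and> b < c \<and>
     polygon_edge V T a b \<and> polygon_edge V T b c \<and> polygon_edge V T a c}"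

definition triangles_at :: "nat set \<Rightarrow> (nat \<times> nat) set \<Rightarrow> nat \<Rightarrow> (nat \<times> nat \<times> nat) set" where
  "triangles_at V T v = {(a, b, c) \<in> polygon_triangles V T. v \<in> {a, b, c}}"

lemma crosses_commute: "crosses d e \<longleftrightarrow> crosses e d"
  by (cases d; cases e) (auto simp: crosses_def)

lemma not_crosses_self: "\<not> crosses d d"
  by (cases d) (auto simp: crosses_def)

lemma polygon_side_not_crosses:
  "polygon_side V x y \<Longrightarrow> u \<in> V \<Longrightarrow> v \<in> V \<Longrightarrow> \<not> crosses (x, y) (u, v)"
  unfolding polygon_side_def adjacent_def crosses_def by force

lemma polygon_diag_card:
  assumes "finite V" "polygon_diag V a b"
  shows "4 \<le> card V"
proof -
  from assms(2) obtain c d where "c \<in> V" "a < c" "c < b" "d \<in> V" "d \<notin> {a..b}" "a \<in> V" "b \<in> V"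
    unfolding polygon_diag_def polygon_side_def adjacent_def by blast
  then have "{a, b, c, d} \<subseteq> V" "card {a, b, c, d} = 4" by auto
  then show ?thesis using card_mono[OF assms(1)] by metis
qed

lemma exists_polygon_diag:
  assumes "finite V" "4 \<le> card V"
  obtains a b where "polygon_diag V a b"
proof -
  define l where "l = sorted_list_of_set V"
  have l: "sorted_wrt (<) l" "set l = V" "length l = card V"
    using assms(1) unfolding l_def by auto
  have lt: "l ! i < l ! j" if "i < j" "j < 4" for i j
    using sorted_wrt_nth_less[OF l(1) that(1)] that assms(2) l(3) by simp
  have mem: "l ! i \<in> V" if "i < 4" for i
    using that assms(2) l(2,3) nth_mem[of i l] by simp
  have "polygon_diag V (l ! 0) (l ! 2)"
    unfolding polygon_diag_def polygon_side_def adjacent_def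
    using lt[of 0 1] lt[of 1 2] lt[of 0 2] lt[of 2 3] mem[of 0] mem[of 1] mem[of 2] mem[of 3]
    by (auto simp: subset_iff)
  then show ?thesis by (rule that)
qed

context
  fixes V :: "nat set" and T :: "(nat \<times> nat) set"
  assumes tri: "polygon_triangulation V T"
begin

lemma triangulation_finite: "finite V"
  using tri by (simp add: polygon_triangulation_def)

lemma triangulation_diag: "(x, y) \<in> T \<Longrightarrow> polygon_diag V x y"
  using tri by (auto simp: polygon_triangulation_def polygon_noncrossing_def)

lemma triangulation_noncrossing: "d \<in> T \<Longrightarrow> e \<in> T \<Longrightarrow> \<not> crosses d e"
  using tri by (auto simp: polygon_triangulation_def polygon_noncrossing_def)

lemma triangulation_maximal:
  assumes "polygon_diag V x y" "\<forall>(u, v) \<in> T. \<not> crosses (x, y) (u, v)"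
  shows "(x, y) \<in> T"
proof -
  have "polygon_noncrossing V (insert (x, y) T)"
    using assms triangulation_diag triangulation_noncrossing crosses_commute not_crosses_self
    unfolding polygon_noncrossing_def by fast
  then show ?thesis
    using tri unfolding polygon_triangulation_def by blast
qed

lemma polygon_edge_bounds: "polygon_edge V T x y \<Longrightarrow> x \<in> V \<and> y \<in> V \<and> x < y"
  by (auto simp: polygon_edge_def polygon_side_def adjacent_def polygon_diag_def
      dest: triangulation_diag)

lemma polygon_edge_not_crosses: "polygon_edge V T x y \<Longrightarrow> (u, v) \<in> T \<Longrightarrow> \<not> crosses (x, y) (u, v)"
  unfolding polygon_edge_def
  by (metis polygon_diag_def polygon_side_not_crosses triangulation_diag triangulation_noncrossing)

text \<open>The apex z is the largest vertex between x and y joined to x: were z not joined to y, the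
  diagonal (z, y) would be in T by maximality, as a diagonal of T crossing it would cross (x, y)
  or (x, z), or join x to a vertex beyond z.\<close>
lemma polygon_edge_apex:
  assumes e: "polygon_edge V T x y" and between: "\<exists>z\<in>V. x < z \<and> z < y"
  shows "\<exists>z\<in>V. x < z \<and> z < y \<and> polygon_edge V T x z \<and> polygon_edge V T z y"
proof -
  define Z where "Z = {z\<in>V. x < z \<and> z < y \<and> polygon_edge V T x z}"
  have xy: "x \<in> V" "y \<in> V" "x < y" using polygon_edge_bounds[OF e] by auto
  have fZ: "finite Z" using triangulation_finite unfolding Z_def by simp
  define z0 where "z0 = Min {z\<in>V. x < z}"
  have fz: "finite {z\<in>V. x < z}" using triangulation_finite by simp
  have nez: "{z\<in>V. x < z} \<noteq> {}" using between by auto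
  have z0: "z0 \<in> V" "x < z0" "\<forall>z\<in>V. x < z \<longrightarrow> z0 \<le> z"
    using Min_in[OF fz nez] Min_le[OF fz] unfolding z0_def by auto
  have "z0 \<in> Z"
    using z0 xy between unfolding Z_def polygon_edge_def polygon_side_def adjacent_def by force
  define z where "z = Max Z"
  have zZ: "z \<in> Z" using Max_in[OF fZ] \<open>z0 \<in> Z\<close> unfolding z_def by auto
  have zmax: "\<forall>z'\<in>Z. z' \<le> z" using Max_ge[OF fZ] unfolding z_def by auto
  have z: "z \<in> V" "x < z" "z < y" "polygon_edge V T x z" using zZ unfolding Z_def by auto
  have "polygon_edge V T z y"
  proof (rule ccontr)
    assume not_edge: "\<not> polygon_edge V T z y"
    then have "polygon_diag V z y"
      using z xy unfolding polygon_diag_def polygon_edge_def by auto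
    moreover have "\<not> crosses (z, y) (u, v)" if uv: "(u, v) \<in> T" for u v
    proof
      assume cr: "crosses (z, y) (u, v)"
      have "\<not> crosses (x, y) (u, v)" "\<not> crosses (x, z) (u, v)"
        using polygon_edge_not_crosses[OF e uv] polygon_edge_not_crosses[OF z(4) uv] .
      then have "u = x" "z < v" "v < y"
        using cr z(2,3) by (auto simp: crosses_def)
      then have "v \<in> Z"
        using uv triangulation_diag[OF uv] z(2)
        unfolding Z_def polygon_diag_def polygon_edge_def by auto
      then show False using zmax \<open>z < v\<close> by force
    qed
    ultimately have "(z, y) \<in> T" by (intro triangulation_maximal) auto
    then show False using not_edge by (simp add: polygon_edge_def)
  qed
  then show ?thesis using z by blast
qed

lemma edge_over_adjacent_in_triangle:
  assumes "polygon_edge V T x y" "x \<le> s" "s' \<le> y" "adjacent V s s'" "(x, y) \<noteq> (s, s')"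
  shows "\<exists>a b c. (a, b, c) \<in> polygon_triangles V T \<and> s \<in> {a, b, c} \<and> s' \<in> {a, b, c}"
  using assms
proof (induction "y - x" arbitrary: x y rule: less_induct)
  case less
  have ss': "s \<in> V" "s' \<in> V" "s < s'" "\<forall>w\<in>V. \<not> (s < w \<and> w < s')"
    using less.prems(4) unfolding adjacent_def by auto
  have "\<exists>z\<in>V. x < z \<and> z < y"
    using less.prems(2,3,5) ss' by (metis le_neq_implies_less order.strict_trans1 order.strict_trans2)
  then obtain z where z: "z \<in> V" "x < z" "z < y" "polygon_edge V T x z" "polygon_edge V T z y"
    using polygon_edge_apex[OF less.prems(1)] by blast
  have xzy: "(x, z, y) \<in> polygon_triangles V T"
    using z less.prems(1) by (simp add: polygon_triangles_def)
  consider "s' \<le> z" | "z \<le> s" using ss' z(1) by fastforce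
  then show ?case
  proof cases
    case 1
    show ?thesis
    proof (cases "(x, z) = (s, s')")
      case True then show ?thesis using xzy by blast
    next
      case False then show ?thesis using less.hyps[of z x] less.prems z 1 by auto
    qed
  next
    case 2
    show ?thesis
    proof (cases "(z, y) = (s, s')")
      case True then show ?thesis using xzy by blast
    next
      case False then show ?thesis using less.hyps[of y z] less.prems z 2 by auto
    qed
  qed
qed

lemma adjacent_in_triangle:
  assumes "adjacent V s s'"
  shows "\<exists>a b c. (a, b, c) \<in> polygon_triangles V T \<and> s \<in> {a, b, c} \<and> s' \<in> {a, b, c}"
proof (rule edge_over_adjacent_in_triangle)
  have fin: "finite V" and ne: "V \<noteq> {}" and card3: "3 \<le> card V"
    using tri by (auto simp: polygon_triangulation_def)
  have V: "s \<in> V" "s' \<in> V" "s < s'" using assms by (auto simp: adjacent_def)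
  have span: "V \<subseteq> {Min V..Max V}" using fin by auto
  show "Min V \<le> s" "s' \<le> Max V" using fin V by auto
  show "polygon_edge V T (Min V) (Max V)"
    using span V Min_in[OF fin ne] Max_in[OF fin ne] Min_le[OF fin V(1)] Max_ge[OF fin V(2)]
    unfolding polygon_edge_def polygon_side_def by auto
  show "(Min V, Max V) \<noteq> (s, s')"
  proof
    assume "(Min V, Max V) = (s, s')"
    then have "V \<subseteq> {s, s'}" using span assms by (force simp: adjacent_def)
    then have "card V \<le> card {s, s'}" using fin by (simp add: card_mono)
    also have "\<dots> \<le> 2" by (simp add: card_insert_if)
    finally show False using card3 by simp
  qed
qed (use assms in auto)

end

section \<open>Ears, and uniqueness of a triangulation with given triangle counts\<close>

definition ear :: "nat set \<Rightarrow> nat \<Rightarrow> nat \<Rightarrow> nat \<Rightarrow> bool" where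
  "ear V x v y \<longleftrightarrow> adjacent V x v \<and> adjacent V v y"

lemma adjacent_unique_left: "adjacent V a v \<Longrightarrow> adjacent V b v \<Longrightarrow> a = b"
  unfolding adjacent_def by (metis linorder_neqE_nat)

lemma adjacent_unique_right: "adjacent V v a \<Longrightarrow> adjacent V v b \<Longrightarrow> a = b"
  unfolding adjacent_def by (metis linorder_neqE_nat)

lemma ear_between: "ear V x v y \<Longrightarrow> z \<in> V \<Longrightarrow> x < z \<Longrightarrow> z < y \<Longrightarrow> z = v"
  unfolding ear_def adjacent_def by (metis linorder_neqE_nat)

lemma ear_not_side:
  assumes "finite V" "4 \<le> card V" "ear V x v y"
  shows "\<not> polygon_side V x y"
proof
  assume side: "polygon_side V x y"
  have "x < v" "v < y" "v \<in> V" using assms(3) by (auto simp: ear_def adjacent_def)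
  then have "V \<subseteq> {x..y}" using side by (auto simp: polygon_side_def adjacent_def)
  then have "V \<subseteq> {x, v, y}" using ear_between[OF assms(3)] by fastforce
  then have "card V \<le> card {x, v, y}" by (simp add: card_mono)
  also have "\<dots> \<le> 3" by (simp add: card_insert_if)
  finally show False using assms(2) by simp
qed

lemma adjacent_remove_ear:
  assumes ear: "ear V x v y"
  shows "adjacent (V - {v}) a b \<longleftrightarrow> adjacent V a b \<and> a \<noteq> v \<and> b \<noteq> v \<or> a = x \<and> b = y"
proof
  assume adj: "adjacent (V - {v}) a b"
  show "adjacent V a b \<and> a \<noteq> v \<and> b \<noteq> v \<or> a = x \<and> b = y"
  proof (cases "a < v \<and> v < b")
    case True
    then have "a = x" "b = y"
      using adj ear unfolding ear_def adjacent_def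
      by (metis antisym_conv3 insert_Diff insert_iff order.strict_trans)+
    then show ?thesis by simp
  next
    case False
    then show ?thesis using adj unfolding adjacent_def by auto
  qed
next
  assume "adjacent V a b \<and> a \<noteq> v \<and> b \<noteq> v \<or> a = x \<and> b = y"
  then show "adjacent (V - {v}) a b"
  proof
    assume "adjacent V a b \<and> a \<noteq> v \<and> b \<noteq> v"
    then show ?thesis by (auto simp: adjacent_def)
  next
    assume ab: "a = x \<and> b = y"
    have "x \<in> V - {v}" "y \<in> V - {v}" "x < y" using ear by (auto simp: ear_def adjacent_def)
    moreover have "\<not> (x < w \<and> w < y)" if "w \<in> V - {v}" for w
      using that ear_between[OF ear, of w] by blast
    ultimately show ?thesis using ab unfolding adjacent_def by blast
  qed
qed

lemma polygon_side_remove_ear: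
  assumes ear: "ear V x v y"
  shows "polygon_side (V - {v}) a b \<longleftrightarrow> polygon_side V a b \<and> a \<noteq> v \<and> b \<noteq> v \<or> a = x \<and> b = y"
proof -
  have xvy: "x \<in> V - {v}" "y \<in> V - {v}" "x < v" "v < y"
    using ear by (auto simp: ear_def adjacent_def)
  have "(a \<in> V - {v} \<and> b \<in> V - {v} \<and> a < b \<and> V - {v} \<subseteq> {a..b}) \<longleftrightarrow>
      (a \<in> V \<and> b \<in> V \<and> a < b \<and> V \<subseteq> {a..b}) \<and> a \<noteq> v \<and> b \<noteq> v"
  proof
    assume span: "a \<in> V - {v} \<and> b \<in> V - {v} \<and> a < b \<and> V - {v} \<subseteq> {a..b}"
    then have "a \<le> x" "y \<le> b" using xvy by auto
    then have "v \<in> {a..b}" using xvy by simp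
    then show "(a \<in> V \<and> b \<in> V \<and> a < b \<and> V \<subseteq> {a..b}) \<and> a \<noteq> v \<and> b \<noteq> v"
      using span by blast
  qed auto
  then show ?thesis
    unfolding polygon_side_def adjacent_remove_ear[OF ear] by blast
qed

lemma polygon_diag_remove_ear:
  assumes "ear V x v y"
  shows "polygon_diag (V - {v}) a b \<longleftrightarrow> polygon_diag V a b \<and> a \<noteq> v \<and> b \<noteq> v \<and> (a, b) \<noteq> (x, y)"
  using polygon_side_remove_ear[OF assms] unfolding polygon_diag_def by auto

context
  fixes V :: "nat set" and T :: "(nat \<times> nat) set"
  assumes tri: "polygon_triangulation V T"
begin

context
  fixes x v y :: nat
  assumes ear: "ear V x v y" and ear_diag: "(x, y) \<in> T"
begin

lemma ear_edge_left: "polygon_edge V T a v \<Longrightarrow> a = x"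
proof (cases "(a, v) \<in> T")
  case True
  have xv: "adjacent V x v" and vy: "adjacent V v y" using ear by (auto simp: ear_def)
  have "polygon_diag V a v" using triangulation_diag[OF tri True] .
  then have "a < x"
    using xv unfolding polygon_diag_def polygon_side_def adjacent_def by (metis linorder_neqE_nat)
  then have "crosses (x, y) (a, v)" using xv vy by (auto simp: crosses_def adjacent_def)
  then show ?thesis using triangulation_noncrossing[OF tri ear_diag True] by blast
next
  case False
  assume "polygon_edge V T a v"
  then have "polygon_side V a v" using False by (simp add: polygon_edge_def)
  moreover have "\<not> V \<subseteq> {a..v}" using ear by (auto simp: ear_def adjacent_def)
  ultimately have "adjacent V a v" by (simp add: polygon_side_def)
  then show ?thesis using adjacent_unique_left ear by (auto simp: ear_def)
qed

lemma ear_edge_right: "polygon_edge V T v b \<Longrightarrow> b = y"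
proof (cases "(v, b) \<in> T")
  case True
  have xv: "adjacent V x v" and vy: "adjacent V v y" using ear by (auto simp: ear_def)
  have "polygon_diag V v b" using triangulation_diag[OF tri True] .
  then have "y < b"
    using vy unfolding polygon_diag_def polygon_side_def adjacent_def by (metis linorder_neqE_nat)
  then have "crosses (x, y) (v, b)" using xv vy by (auto simp: crosses_def adjacent_def)
  then show ?thesis using triangulation_noncrossing[OF tri ear_diag True] by blast
next
  case False
  assume "polygon_edge V T v b"
  then have "polygon_side V v b" using False by (simp add: polygon_edge_def)
  moreover have "\<not> V \<subseteq> {v..b}" using ear by (auto simp: ear_def adjacent_def)
  ultimately have "adjacent V v b" by (simp add: polygon_side_def)
  then show ?thesis using adjacent_unique_right ear by (auto simp: ear_def)
qed

lemma ear_not_endpoint: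
  assumes "(a, b) \<in> T"
  shows "a \<noteq> v" "b \<noteq> v"
proof -
  have edge: "polygon_edge V T a b" and not_side: "\<not> polygon_side V a b"
    using assms triangulation_diag[OF tri assms] by (simp_all add: polygon_edge_def polygon_diag_def)
  have "polygon_side V x v" "polygon_side V v y" using ear by (simp_all add: ear_def polygon_side_def)
  show "a \<noteq> v"
  proof
    assume "a = v"
    then have "b = y" using ear_edge_right edge by simp
    then show False using not_side \<open>polygon_side V v y\<close> \<open>a = v\<close> by simp
  qed
  show "b \<noteq> v"
  proof
    assume "b = v"
    then have "a = x" using ear_edge_left edge by simp
    then show False using not_side \<open>polygon_side V x v\<close> \<open>b = v\<close> by simp
  qed
qed

lemma ear_triangles_at: "triangles_at V T v = {(x, v, y)}"
proof
  show "triangles_at V T v \<subseteq> {(x, v, y)}"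
  proof
    fix t
    assume t: "t \<in> triangles_at V T v"
    obtain a b c where t_abc: "t = (a, b, c)" by (cases t)
    have abc: "a < b" "b < c" "polygon_edge V T a b" "polygon_edge V T b c" "polygon_edge V T a c"
      and "v \<in> {a, b, c}"
      using t unfolding t_abc by (auto simp: triangles_at_def polygon_triangles_def)
    then consider "v = a" | "v = b" | "v = c" by blast
    then have "a = x \<and> b = v \<and> c = y"
    proof cases
      case 1
      then have "b = y" "c = y" using ear_edge_right[of b] ear_edge_right[of c] abc(3,5) by simp_all
      then show ?thesis using abc by simp
    next
      case 2
      then show ?thesis using abc ear_edge_left ear_edge_right by simp
    next
      case 3
      then have "a = x" "b = x" using ear_edge_left[of a] ear_edge_left[of b] abc(4,5) by simp_all
      then show ?thesis using abc by simp
    qed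
    then show "t \<in> {(x, v, y)}" using t_abc by simp
  qed
  have "x < v" "v < y" "polygon_side V x v" "polygon_side V v y"
    using ear by (auto simp: ear_def polygon_side_def adjacent_def)
  then show "{(x, v, y)} \<subseteq> triangles_at V T v"
    using ear_diag by (simp add: triangles_at_def polygon_triangles_def polygon_edge_def)
qed

lemma polygon_edge_remove_ear:
  "polygon_edge (V - {v}) (T - {(x, y)}) a b \<longleftrightarrow> polygon_edge V T a b \<and> a \<noteq> v \<and> b \<noteq> v"
  using ear_not_endpoint[of a b] ear_diag ear
  unfolding polygon_edge_def polygon_side_remove_ear[OF ear] by (auto simp: ear_def adjacent_def)

lemma polygon_triangles_remove_ear:
  "polygon_triangles (V - {v}) (T - {(x, y)}) = polygon_triangles V T - {(x, v, y)}"
proof -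
  have "t \<in> polygon_triangles (V - {v}) (T - {(x, y)}) \<longleftrightarrow>
      t \<in> polygon_triangles V T \<and> t \<notin> triangles_at V T v" for t
    by (cases t) (auto simp: polygon_triangles_def triangles_at_def polygon_edge_remove_ear)
  then show ?thesis unfolding ear_triangles_at by blast
qed

lemma triangles_at_remove_ear:
  "triangles_at (V - {v}) (T - {(x, y)}) w = triangles_at V T w - {(x, v, y)}"
  unfolding triangles_at_def polygon_triangles_remove_ear by blast

lemma ear_triangle_mem_triangles_at: "(x, v, y) \<in> triangles_at V T w \<longleftrightarrow> w \<in> {x, v, y}"
proof -
  have "(x, v, y) \<in> triangles_at V T v" using ear_triangles_at by simp
  then show ?thesis by (auto simp: triangles_at_def)
qed

lemma triangulation_remove_ear: "polygon_triangulation (V - {v}) (T - {(x, y)})"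
  unfolding polygon_triangulation_def
proof (intro conjI allI impI)
  have fin: "finite V" using triangulation_finite[OF tri] .
  show "finite (V - {v})" using fin by simp
  have "4 \<le> card V" using polygon_diag_card[OF fin triangulation_diag[OF tri ear_diag]] .
  then show "3 \<le> card (V - {v})" using ear by (simp add: ear_def adjacent_def)
  have "polygon_diag (V - {v}) a b" if "(a, b) \<in> T - {(x, y)}" for a b
    using that triangulation_diag[OF tri, of a b] ear_not_endpoint[of a b]
    unfolding polygon_diag_remove_ear[OF ear] by simp
  then show "polygon_noncrossing (V - {v}) (T - {(x, y)})"
    using triangulation_noncrossing[OF tri] unfolding polygon_noncrossing_def by blast
  fix D
  assume D: "polygon_noncrossing (V - {v}) D \<and> T - {(x, y)} \<subseteq> D"
  have D_diag: "polygon_diag V a b" "a \<noteq> v" "b \<noteq> v" "(a, b) \<noteq> (x, y)" if "(a, b) \<in> D" for a b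
    using D that unfolding polygon_noncrossing_def polygon_diag_remove_ear[OF ear] by auto
  have "\<not> crosses (x, y) (a, b)" if "(a, b) \<in> D" for a b
    using D_diag[OF that] ear_between[OF ear, of a] ear_between[OF ear, of b]
    unfolding crosses_def polygon_diag_def by auto
  then have "polygon_noncrossing V (insert (x, y) D)"
    using D D_diag triangulation_diag[OF tri ear_diag] crosses_commute not_crosses_self
    unfolding polygon_noncrossing_def by auto
  moreover have "T \<subseteq> insert (x, y) D" using D by blast
  ultimately have "insert (x, y) D = T" using tri unfolding polygon_triangulation_def by blast
  then show "D = T - {(x, y)}" using D_diag(4) by auto
qed

end

lemma ear_exists:
  assumes "4 \<le> card V"
  obtains x v y where "ear V x v y" "(x, y) \<in> T"
proof -
  have fin: "finite V" using triangulation_finite[OF tri] .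
  define inner where "inner d = card {z\<in>V. fst d < z \<and> z < snd d}" for d
  have "T \<noteq> {}"
  proof
    assume "T = {}"
    obtain a b where ab: "polygon_diag V a b" using exists_polygon_diag[OF fin assms] .
    then have "polygon_noncrossing V {(a, b)}"
      by (auto simp: polygon_noncrossing_def not_crosses_self)
    then show False using tri \<open>T = {}\<close> unfolding polygon_triangulation_def by blast
  qed
  then obtain x y where xy: "(x, y) \<in> T" and least: "\<And>d. d \<in> T \<Longrightarrow> inner (x, y) \<le> inner d"
    using ex_has_least_nat[of "\<lambda>d. d \<in> T" _ inner] by fastforce
  have diag: "polygon_diag V x y" using triangulation_diag[OF tri xy] .
  then have "\<exists>z\<in>V. x < z \<and> z < y" by (auto simp: polygon_diag_def polygon_side_def adjacent_def)
  then obtain v where v: "v \<in> V" "x < v" "v < y" "polygon_edge V T x v" "polygon_edge V T v y"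
    using polygon_edge_apex[OF tri _] xy by (auto simp: polygon_edge_def)
  have fin_inner: "finite {z\<in>V. x < z \<and> z < y}" using fin by simp
  have "inner (x, v) < inner (x, y)" "inner (v, y) < inner (x, y)"
    unfolding inner_def using v by (auto intro!: psubset_card_mono[OF fin_inner])
  then have "(x, v) \<notin> T" "(v, y) \<notin> T" using least leD by blast+
  then have "polygon_side V x v" "polygon_side V v y" using v by (simp_all add: polygon_edge_def)
  moreover have "\<not> V \<subseteq> {x..v}" "\<not> V \<subseteq> {v..y}" using diag v by (auto simp: polygon_diag_def)
  ultimately have "ear V x v y" by (simp add: ear_def polygon_side_def)
  then show ?thesis using that xy by blast
qed

lemma ear_diag_if_single_triangle:
  assumes "4 \<le> card V" and ear: "ear V x v y" and single: "card (triangles_at V T v) = 1"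
  shows "(x, y) \<in> T"
proof -
  obtain t where t: "triangles_at V T v = {t}" using card_1_singletonE[OF single] .
  obtain a b c where abc: "(a, b, c) \<in> polygon_triangles V T" "x \<in> {a, b, c}" "v \<in> {a, b, c}"
    using adjacent_in_triangle[OF tri, of x v] ear by (auto simp: ear_def)
  obtain a' b' c'
    where abc': "(a', b', c') \<in> polygon_triangles V T" "v \<in> {a', b', c'}" "y \<in> {a', b', c'}"
    using adjacent_in_triangle[OF tri, of v y] ear by (auto simp: ear_def)
  have "(a, b, c) \<in> triangles_at V T v" "(a', b', c') \<in> triangles_at V T v"
    using abc abc' by (auto simp: triangles_at_def)
  then have "(a, b, c) = (a', b', c')" using t by simp
  then have "(a, b, c) = (x, v, y)"
    using abc abc' ear by (auto simp: polygon_triangles_def ear_def adjacent_def)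
  then have "polygon_edge V T x y" using abc(1) by (simp add: polygon_triangles_def)
  then show ?thesis
    using ear_not_side[OF triangulation_finite[OF tri] assms(1) ear] by (simp add: polygon_edge_def)
qed

end

theorem polygon_triangulation_eqI:
  assumes "polygon_triangulation V T" "polygon_triangulation V T'"
    and "\<forall>w\<in>V. card (triangles_at V T w) = card (triangles_at V T' w)"
  shows "T = T'"
  using assms
proof (induction "card V" arbitrary: V T T' rule: less_induct)
  case less
  note tri = less.prems(1) and tri' = less.prems(2) and counts = less.prems(3)
  show ?case
  proof (cases "4 \<le> card V")
    case False
    have "S = {}" if "polygon_triangulation V S" for S
      using False polygon_diag_card[OF triangulation_finite triangulation_diag, OF that that] by fastforce
    then show ?thesis using tri tri' by blast
  next
    case True
    obtain x v y where ear: "ear V x v y" and xy: "(x, y) \<in> T" using ear_exists[OF tri True] .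
    have "v \<in> V" using ear by (simp add: ear_def adjacent_def)
    then have "card (triangles_at V T' v) = card (triangles_at V T v)" using counts by simp
    also have "\<dots> = 1" using ear_triangles_at[OF tri ear xy] by simp
    finally have xy': "(x, y) \<in> T'" by (rule ear_diag_if_single_triangle[OF tri' True ear])
    have "card (triangles_at (V - {v}) (T - {(x, y)}) w) =
        card (triangles_at (V - {v}) (T' - {(x, y)}) w)" if "w \<in> V - {v}" for w
      using that counts
      unfolding triangles_at_remove_ear[OF tri ear xy] triangles_at_remove_ear[OF tri' ear xy']
        card_Diff_singleton_if ear_triangle_mem_triangles_at[OF tri ear xy]
        ear_triangle_mem_triangles_at[OF tri' ear xy'] by simp
    moreover have "card (V - {v}) < card V"
      using \<open>v \<in> V\<close> triangulation_finite[OF tri] by (rule card_Diff1_less[rotated])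
    ultimately have "T - {(x, y)} = T' - {(x, y)}"
      using less.hyps triangulation_remove_ear[OF tri ear xy] triangulation_remove_ear[OF tri' ear xy']
      by blast
    then show ?thesis using xy xy' by blast
  qed
qed

lemma polygon_side_iff_is_side: "polygon_side {0..<N} x y \<longleftrightarrow> is_side N x y"
proof
  assume "polygon_side {0..<N} x y"
  then consider "x < y" "y < N" "\<forall>z<N. \<not> (x < z \<and> z < y)" | "x < y" "y < N" "\<forall>z<N. x \<le> z \<and> z \<le> y"
    unfolding polygon_side_def adjacent_def by force
  then show "is_side N x y"
  proof cases
    case 1
    then have "y = x + 1" by presburger
    then show ?thesis using 1 by (simp add: is_side_def)
  next
    case 2
    have "x = 0" using 2 by presburger
    moreover have "y = N - 1" using 2(2) 2(3)[rule_format, of "N - 1"] by (cases N) auto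
    ultimately show ?thesis using 2 by (simp add: is_side_def)
  qed
next
  assume "is_side N x y"
  then show "polygon_side {0..<N} x y"
    unfolding is_side_def polygon_side_def adjacent_def by force
qed

lemma polygon_diag_iff_is_diag: "polygon_diag {0..<N} x y \<longleftrightarrow> is_diag N x y"
  unfolding polygon_diag_def is_diag_def polygon_side_iff_is_side by auto

lemma polygon_triangulation_iff_triangulation: "polygon_triangulation {0..<N} T \<longleftrightarrow> triangulation N T"
  unfolding polygon_triangulation_def triangulation_def polygon_noncrossing_def noncrossing_diags_def
    polygon_diag_iff_is_diag by simp

lemma polygon_triangles_eq_triangles: "polygon_triangles {0..<N} T = triangles N T"
  unfolding polygon_triangles_def triangles_def polygon_edge_def is_edge_def polygon_side_iff_is_side ..

lemma quiddity_eq_card_triangles_at: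
  "quiddity N T i = int (card (triangles_at {0..<N} T (nat (i mod int N))))"
  by (simp add: quiddity_def triangles_at_def polygon_triangles_eq_triangles)

definition has_period :: "(int \<Rightarrow> 'a) \<Rightarrow> nat \<Rightarrow> bool" where
  "has_period a p \<longleftrightarrow> (\<forall>i. a (i + int p) = a i)"

lemma has_period_mult:
  assumes "has_period a p"
  shows "has_period a (k * p)"
  unfolding has_period_def
proof
  fix i show "a (i + int (k * p)) = a i"
  proof (induction k)
    case (Suc k)
    have "a (i + int (Suc k * p)) = a ((i + int (k * p)) + int p)" by (simp add: algebra_simps)
    also have "\<dots> = a (i + int (k * p))" using assms by (simp add: has_period_def)
    finally show ?case using Suc by simp
  qed simp
qed

lemma has_period_dvd: "has_period a p \<Longrightarrow> p dvd s \<Longrightarrow> has_period a s"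
  by (metis dvd_def has_period_mult mult.commute)

lemma has_period_mod:
  assumes "has_period a s" "has_period a p"
  shows "has_period a (s mod p)"
  unfolding has_period_def
proof
  fix i
  have "a (i + int (s mod p)) = a (i + int (s mod p) + int (s div p * p))"
    using has_period_mult[OF assms(2)] by (simp add: has_period_def)
  also have "\<dots> = a (i + int s)" by (metis div_mult_mod_eq add.assoc add.commute of_nat_add)
  finally show "a (i + int (s mod p)) = a i" using assms(1) by (simp add: has_period_def)
qed

lemma min_period:
  assumes "has_period a N" "0 < N"
  shows "0 < min_period a" "has_period a (min_period a)"
  using LeastI[of "\<lambda>p. 0 < p \<and> has_period a p" N] assms
  unfolding min_period_def has_period_def by auto

lemma has_period_iff_min_period_dvd:
  assumes "has_period a N" "0 < N"
  shows "has_period a s \<longleftrightarrow> min_period a dvd s"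
proof
  assume s: "has_period a s"
  note p = min_period[OF assms]
  show "min_period a dvd s"
  proof (rule ccontr)
    assume "\<not> min_period a dvd s"
    then have "0 < s mod min_period a" using mod_greater_zero_iff_not_dvd by blast
    moreover have "has_period a (s mod min_period a)" using has_period_mod[OF s p(2)] .
    ultimately have "min_period a \<le> s mod min_period a"
      unfolding min_period_def has_period_def by (intro Least_le) simp
    then show False using mod_less_divisor[OF p(1), of s] by linarith
  qed
qed (use has_period_dvd min_period[OF assms] in blast)

lemma has_period_quiddity: "0 < N \<Longrightarrow> has_period (quiddity N T) N"
  by (simp add: has_period_def quiddity_def)

section \<open>Rotations\<close>

definition rotate_vertex :: "nat \<Rightarrow> nat \<Rightarrow> nat \<Rightarrow> nat" where
  "rotate_vertex N s i = (i + s) mod N"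

lemma rotate_pair:
  "rotate N s (x, y) =
     (min (rotate_vertex N s x) (rotate_vertex N s y), max (rotate_vertex N s x) (rotate_vertex N s y))"
  unfolding rotate_def rotate_vertex_def by simp

lemma rotate_sorted: "rotate N s (min a b, max a b) = rotate N s (a, b)"
  unfolding rotate_pair by (cases "a \<le> b") (auto simp: min_def max_def)

lemma rotate_vertex_less: "0 < N \<Longrightarrow> rotate_vertex N s i < N"
  by (simp add: rotate_vertex_def)

lemma rotate_vertex_eq: "i < N \<Longrightarrow> s < N \<Longrightarrow> rotate_vertex N s i = (if i + s < N then i + s else i + s - N)"
  unfolding rotate_vertex_def by (auto simp: mod_if)

lemma rotate_vertex_inverse: "i < N \<Longrightarrow> s < N \<Longrightarrow> rotate_vertex N ((N - s) mod N) (rotate_vertex N s i) = i"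
  unfolding rotate_vertex_def by (simp add: mod_add_eq)

lemma rotate_vertex_inj: "a < N \<Longrightarrow> b < N \<Longrightarrow> s < N \<Longrightarrow> rotate_vertex N s a = rotate_vertex N s b \<longleftrightarrow> a = b"
  by (metis rotate_vertex_inverse)

lemma inverse_shift_involution: "s < N \<Longrightarrow> (N - (N - s) mod N) mod N = (s :: nat)"
  by (cases "s = 0") (auto simp: mod_if)

lemma is_side_rotate:
  assumes "a < N" "b < N" "s < N" "a \<noteq> b"
  shows "is_side N (min (rotate_vertex N s a) (rotate_vertex N s b))
      (max (rotate_vertex N s a) (rotate_vertex N s b)) \<longleftrightarrow> is_side N (min a b) (max a b)"
  using assms unfolding rotate_vertex_eq[OF assms(1,3)] rotate_vertex_eq[OF assms(2,3)] is_side_def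
  by (auto simp: min_def max_def split: if_splits)

text \<open>Crossing of chords only depends on the cyclic order of their endpoints, which rotations
  preserve.\<close>
definition cyclic_between :: "nat \<Rightarrow> nat \<Rightarrow> nat \<Rightarrow> bool" where
  "cyclic_between a x b \<longleftrightarrow> a < x \<and> x < b \<or> x < b \<and> b < a \<or> b < a \<and> a < x"

lemma crosses_iff_cyclic_between:
  assumes "a \<noteq> b" "c \<noteq> d"
  shows "crosses (min a b, max a b) (min c d, max c d) \<longleftrightarrow>
    a \<noteq> c \<and> a \<noteq> d \<and> b \<noteq> c \<and> b \<noteq> d \<and> (cyclic_between a c b \<longleftrightarrow> \<not> cyclic_between a d b)"
  using assms by (cases "a < b"; cases "c < d") (auto simp: crosses_def cyclic_between_def min_def max_def)

lemma cyclic_between_rotate: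
  assumes "a < N" "x < N" "b < N" "s < N"
  shows "cyclic_between (rotate_vertex N s a) (rotate_vertex N s x) (rotate_vertex N s b) \<longleftrightarrow>
    cyclic_between a x b"
  using assms unfolding rotate_vertex_eq[OF assms(1,4)] rotate_vertex_eq[OF assms(2,4)]
    rotate_vertex_eq[OF assms(3,4)] cyclic_between_def
  by (auto split: if_splits)

lemma crosses_rotate:
  assumes "a < b" "b < N" "c < d" "d < N" "s < N"
  shows "crosses (rotate N s (a, b)) (rotate N s (c, d)) \<longleftrightarrow> crosses (a, b) (c, d)"
proof -
  have "a < N" "c < N" using assms by simp_all
  then have distinct:
      "rotate_vertex N s a \<noteq> rotate_vertex N s b" "rotate_vertex N s c \<noteq> rotate_vertex N s d"
    using rotate_vertex_inj assms by auto
  have "crosses (a, b) (c, d) = crosses (min a b, max a b) (min c d, max c d)"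
    using assms by simp
  then show ?thesis
    unfolding rotate_pair crosses_iff_cyclic_between[OF distinct]
      crosses_iff_cyclic_between[of a b c d, OF less_imp_neq less_imp_neq, OF assms(1,3)]
    using cyclic_between_rotate[of a N _ b s] rotate_vertex_inj[of _ N _ s] assms \<open>a < N\<close> \<open>c < N\<close>
    by auto
qed

lemma rotate_inverse:
  assumes "x < N" "y < N" "s < N"
  shows "rotate N ((N - s) mod N) (rotate N s (x, y)) = (min x y, max x y)"
  unfolding rotate_pair[of N s] rotate_sorted
  by (simp add: rotate_pair rotate_vertex_inverse assms)

lemma is_diag_rotate:
  assumes "is_diag N x y" "s < N"
  shows "case_prod (is_diag N) (rotate N s (x, y))"
proof -
  have xy: "x < y" "y < N" "\<not> is_side N x y" using assms by (auto simp: is_diag_def)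
  have "rotate_vertex N s x \<noteq> rotate_vertex N s y" using rotate_vertex_inj[of x N y s] xy assms by auto
  moreover have "rotate_vertex N s x < N" "rotate_vertex N s y < N" using rotate_vertex_less xy by auto
  moreover have "\<not> is_side N (min (rotate_vertex N s x) (rotate_vertex N s y))
      (max (rotate_vertex N s x) (rotate_vertex N s y))"
    using is_side_rotate[of x N y s] xy assms by (simp add: min_def max_def)
  ultimately show ?thesis unfolding rotate_pair is_diag_def by (auto simp: min_def max_def)
qed

lemma noncrossing_rotate:
  assumes nc: "noncrossing_diags N D" and s: "s < N"
  shows "noncrossing_diags N (rotate N s ` D)"
  unfolding noncrossing_diags_def
proof (intro conjI ballI)
  fix e assume "e \<in> rotate N s ` D"
  then obtain x y where "(x, y) \<in> D" "e = rotate N s (x, y)" by auto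
  moreover have "is_diag N x y" using nc calculation by (auto simp: noncrossing_diags_def)
  ultimately show "case e of (x, y) \<Rightarrow> is_diag N x y" using is_diag_rotate[OF _ s] by simp
next
  fix d e assume "d \<in> rotate N s ` D" "e \<in> rotate N s ` D"
  then obtain x y u v where xy: "(x, y) \<in> D" "d = rotate N s (x, y)"
    and uv: "(u, v) \<in> D" "e = rotate N s (u, v)"
    by auto
  have "x < y" "y < N" "u < v" "v < N" using nc xy uv by (auto simp: noncrossing_diags_def is_diag_def)
  moreover have "\<not> crosses (x, y) (u, v)" using nc xy uv by (auto simp: noncrossing_diags_def)
  ultimately show "\<not> crosses d e" unfolding xy(2) uv(2) using crosses_rotate s by simp
qed

lemma rotate_inverse_image:
  assumes nc: "noncrossing_diags N D" and s: "s < N"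
  shows "rotate N ((N - s) mod N) ` rotate N s ` D = D"
proof -
  have "rotate N ((N - s) mod N) (rotate N s (x, y)) = (x, y)" if "(x, y) \<in> D" for x y
    using nc that rotate_inverse[of x N y s] s by (auto simp: noncrossing_diags_def is_diag_def)
  then show ?thesis by (force simp: image_image)
qed

lemma triangulation_rotate:
  assumes tri: "triangulation N T" and s: "s < N"
  shows "triangulation N (rotate N s ` T)"
  unfolding triangulation_def
proof (intro conjI allI impI)
  have nc: "noncrossing_diags N T" using tri by (simp add: triangulation_def)
  define s' where "s' = (N - s) mod N"
  have s': "s' < N" "(N - s') mod N = s" using s inverse_shift_involution unfolding s'_def by auto
  show "3 \<le> N" using tri by (simp add: triangulation_def)
  show "noncrossing_diags N (rotate N s ` T)" using noncrossing_rotate[OF nc s] .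
  fix D
  assume D: "noncrossing_diags N D \<and> rotate N s ` T \<subseteq> D"
  have "T \<subseteq> rotate N s' ` D"
    using image_mono[OF D[THEN conjunct2], of "rotate N s'"] rotate_inverse_image[OF nc s]
    unfolding s'_def by simp
  then have "rotate N s' ` D = T"
    using tri noncrossing_rotate[OF _ s'(1)] D unfolding triangulation_def by blast
  then show "D = rotate N s ` T"
    using rotate_inverse_image[OF _ s'(1), of D] D s'(2) by simp
qed

lemma card3_sorted:
  fixes S :: "nat set"
  assumes "card S = 3"
  obtains a b c where "a < b" "b < c" "S = {a, b, c}"
proof -
  have fin: "finite S" using assms by (metis card.infinite zero_neq_numeral)
  define l where "l = sorted_list_of_set S"
  have l: "length l = 3" "sorted_wrt (<) l" "set l = S" using fin assms unfolding l_def by auto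
  then obtain a b c where "l = [a, b, c]" by (auto simp: numeral_3_eq_3 length_Suc_conv)
  then show ?thesis using l that by auto
qed

lemma sorted_triple_eq:
  fixes a b c a' b' c' :: nat
  assumes "a < b" "b < c" "a' < b'" "b' < c'" "{a, b, c} = {a', b', c'}"
  shows "(a, b, c) = (a', b', c')"
proof -
  have "a' \<in> {a, b, c}" "b' \<in> {a, b, c}" "c' \<in> {a, b, c}" using assms(5) by auto
  then show ?thesis using assms(1-4) by auto
qed

lemma is_edge_bounds: "noncrossing_diags N T \<Longrightarrow> is_edge N T a b \<Longrightarrow> a < b \<and> b < N"
  by (auto simp: is_edge_def is_side_def noncrossing_diags_def is_diag_def)

definition joined :: "nat \<Rightarrow> (nat \<times> nat) set \<Rightarrow> nat \<Rightarrow> nat \<Rightarrow> bool" where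
  "joined N T a b \<longleftrightarrow> is_edge N T (min a b) (max a b)"

text \<open>Triangles as vertex sets rather than sorted triples, so that rotations act on them by
  images.\<close>
definition triangle_sets_at :: "nat \<Rightarrow> (nat \<times> nat) set \<Rightarrow> nat \<Rightarrow> nat set set" where
  "triangle_sets_at N T w =
     {S. S \<subseteq> {..<N} \<and> card S = 3 \<and> w \<in> S \<and> (\<forall>a\<in>S. \<forall>b\<in>S. a \<noteq> b \<longrightarrow> joined N T a b)}"

lemma joined_triangle_iff:
  assumes "a < b" "b < c"
  shows "(\<forall>p\<in>{a, b, c}. \<forall>q\<in>{a, b, c}. p \<noteq> q \<longrightarrow> joined N T p q) \<longleftrightarrow>
    is_edge N T a b \<and> is_edge N T b c \<and> is_edge N T a c"
  using assms by (auto simp: joined_def min_def max_def)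

lemma mem_triangle_sets_at_iff:
  assumes nc: "noncrossing_diags N T" and abc: "a < b" "b < c"
  shows "{a, b, c} \<in> triangle_sets_at N T w \<longleftrightarrow> (a, b, c) \<in> triangles N T \<and> w \<in> {a, b, c}"
proof -
  have "card {a, b, c} = 3" using abc by simp
  moreover have "is_edge N T a c \<Longrightarrow> c < N" using is_edge_bounds[OF nc] by blast
  ultimately show ?thesis
    using abc unfolding triangles_def triangle_sets_at_def mem_Collect_eq joined_triangle_iff[OF abc]
    by auto
qed

lemma card_triangles_eq_card_triangle_sets_at:
  assumes nc: "noncrossing_diags N T"
  shows "card {(a, b, c) \<in> triangles N T. w \<in> {a, b, c}} = card (triangle_sets_at N T w)"
proof (rule bij_betw_same_card[of "\<lambda>(a, b, c). {a, b, c}"])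
  let ?A = "{(a, b, c) \<in> triangles N T. w \<in> {a, b, c}}"
  have sorted: "a < b" "b < c" if "(a, b, c) \<in> ?A" for a b c
    using that by (simp_all add: triangles_def)
  show "bij_betw (\<lambda>(a, b, c). {a, b, c}) ?A (triangle_sets_at N T w)"
    unfolding bij_betw_def
  proof (intro conjI)
    show "inj_on (\<lambda>(a, b, c). {a, b, c}) ?A"
    proof (rule inj_onI)
      fix t t' assume "t \<in> ?A" "t' \<in> ?A" "(\<lambda>(a, b, c). {a, b, c}) t = (\<lambda>(a, b, c). {a, b, c}) t'"
      moreover obtain a b c a' b' c' where tt: "t = (a, b, c)" "t' = (a', b', c')"
        using prod_cases3 by metis
      ultimately have "a < b" "b < c" "a' < b'" "b' < c'" "{a, b, c} = {a', b', c'}"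
        using sorted by simp_all
      then show "t = t'" unfolding tt by (rule sorted_triple_eq)
    qed
    show "(\<lambda>(a, b, c). {a, b, c}) ` ?A = triangle_sets_at N T w"
    proof
      show "(\<lambda>(a, b, c). {a, b, c}) ` ?A \<subseteq> triangle_sets_at N T w"
      proof
        fix S assume "S \<in> (\<lambda>(a, b, c). {a, b, c}) ` ?A"
        then obtain a b c where abc: "(a, b, c) \<in> ?A" "S = {a, b, c}" by auto
        then show "S \<in> triangle_sets_at N T w"
          using mem_triangle_sets_at_iff[OF nc sorted[OF abc(1)]] by simp
      qed
      show "triangle_sets_at N T w \<subseteq> (\<lambda>(a, b, c). {a, b, c}) ` ?A"
      proof
        fix S assume S: "S \<in> triangle_sets_at N T w"
        then have "card S = 3" by (simp add: triangle_sets_at_def)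
        then obtain a b c where abc: "a < b" "b < c" "S = {a, b, c}" by (rule card3_sorted)
        then have "(a, b, c) \<in> ?A" using mem_triangle_sets_at_iff[OF nc abc(1,2)] S by blast
        then show "S \<in> (\<lambda>(a, b, c). {a, b, c}) ` ?A"
          unfolding abc(3) by (rule image_eqI[rotated]) simp
      qed
    qed
  qed
qed

lemma rotate_mem_rotate_image:
  assumes nc: "noncrossing_diags N T" and s: "s < N" and ab: "a < N" "b < N"
  shows "rotate N s (a, b) \<in> rotate N s ` T \<longleftrightarrow> (min a b, max a b) \<in> T"
proof
  assume "rotate N s (a, b) \<in> rotate N s ` T"
  then obtain u v where uv: "(u, v) \<in> T" "rotate N s (a, b) = rotate N s (u, v)" by auto
  have "u < v" "v < N" using nc uv by (auto simp: noncrossing_diags_def is_diag_def)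
  have "(min a b, max a b) = rotate N ((N - s) mod N) (rotate N s (a, b))"
    using rotate_inverse[OF ab s] by simp
  also have "\<dots> = rotate N ((N - s) mod N) (rotate N s (u, v))" using uv by simp
  also have "\<dots> = (u, v)" using rotate_inverse[of u N v s] \<open>u < v\<close> \<open>v < N\<close> s by simp
  finally show "(min a b, max a b) \<in> T" using uv by simp
next
  assume "(min a b, max a b) \<in> T"
  then show "rotate N s (a, b) \<in> rotate N s ` T" by (metis image_eqI rotate_sorted)
qed

lemma joined_rotate:
  assumes nc: "noncrossing_diags N T" and s: "s < N" and ab: "a < N" "b < N" "a \<noteq> b"
  shows "joined N (rotate N s ` T) (rotate_vertex N s a) (rotate_vertex N s b) \<longleftrightarrow> joined N T a b"
  unfolding joined_def is_edge_def is_side_rotate[OF ab(1,2) s ab(3)] rotate_pair[symmetric]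
    rotate_mem_rotate_image[OF nc s ab(1,2)] ..

lemma triangle_sets_at_rotate:
  assumes nc: "noncrossing_diags N T" and s: "s < N" and S: "S \<in> triangle_sets_at N T w"
  shows "rotate_vertex N s ` S \<in> triangle_sets_at N (rotate N s ` T) (rotate_vertex N s w)"
proof -
  have S_props: "S \<subseteq> {..<N}" "card S = 3" "w \<in> S"
    and S_joined: "\<And>a b. a \<in> S \<Longrightarrow> b \<in> S \<Longrightarrow> a \<noteq> b \<Longrightarrow> joined N T a b"
    using S by (auto simp: triangle_sets_at_def)
  have inj: "inj_on (rotate_vertex N s) {..<N}" using rotate_vertex_inj s by (auto simp: inj_on_def)
  have "card (rotate_vertex N s ` S) = 3"
    using card_image[OF inj_on_subset[OF inj S_props(1)]] S_props(2) by simp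
  moreover have "rotate_vertex N s ` S \<subseteq> {..<N}" using rotate_vertex_less s by auto
  moreover have "joined N (rotate N s ` T) (rotate_vertex N s a) (rotate_vertex N s b)"
    if "a \<in> S" "b \<in> S" "rotate_vertex N s a \<noteq> rotate_vertex N s b" for a b
    using that S_props(1) S_joined[of a b] joined_rotate[OF nc s, of a b] by auto
  ultimately show ?thesis using S_props(3) unfolding triangle_sets_at_def by blast
qed

lemma card_triangle_sets_at_rotate_le:
  assumes nc: "noncrossing_diags N T" and s: "s < N"
  shows "card (triangle_sets_at N T w)
    \<le> card (triangle_sets_at N (rotate N s ` T) (rotate_vertex N s w))"
proof (rule card_inj_on_le)
  have inj: "inj_on (rotate_vertex N s) {..<N}" using rotate_vertex_inj s by (auto simp: inj_on_def)
  show "inj_on (image (rotate_vertex N s)) (triangle_sets_at N T w)"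
    using inj_on_image_eq_iff[OF inj] by (auto simp: inj_on_def triangle_sets_at_def)
  show "image (rotate_vertex N s) ` triangle_sets_at N T w
      \<subseteq> triangle_sets_at N (rotate N s ` T) (rotate_vertex N s w)"
    using triangle_sets_at_rotate[OF nc s] by blast
  show "finite (triangle_sets_at N (rotate N s ` T) (rotate_vertex N s w))"
    by (rule finite_subset[of _ "Pow {..<N}"]) (auto simp: triangle_sets_at_def)
qed

lemma nat_mod_add_eq_rotate_vertex:
  assumes "0 < N"
  shows "nat ((i + int s) mod int N) = rotate_vertex N s (nat (i mod int N))"
proof -
  have "int ((nat (i mod int N) + s) mod N) = (i mod int N + int s) mod int N"
    using assms by (simp add: zmod_int)
  also have "\<dots> = (i + int s) mod int N" by (simp add: mod_add_left_eq)
  finally show ?thesis unfolding rotate_vertex_def by linarith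
qed

lemma quiddity_rotate:
  assumes tri: "triangulation N T" and s: "s < N"
  shows "quiddity N (rotate N s ` T) (i + int s) = quiddity N T i"
proof -
  have nc: "noncrossing_diags N T" and N: "0 < N" using tri by (auto simp: triangulation_def)
  have nc': "noncrossing_diags N (rotate N s ` T)" using noncrossing_rotate[OF nc s] .
  define s' where "s' = (N - s) mod N"
  define w where "w = nat (i mod int N)"
  have "w < N" unfolding w_def using N by (simp add: nat_less_iff)
  have le: "card (triangle_sets_at N T w)
      \<le> card (triangle_sets_at N (rotate N s ` T) (rotate_vertex N s w))"
    using card_triangle_sets_at_rotate_le[OF nc s] .
  have "card (triangle_sets_at N (rotate N s ` T) (rotate_vertex N s w))
      \<le> card (triangle_sets_at N (rotate N s' ` rotate N s ` T)
          (rotate_vertex N s' (rotate_vertex N s w)))"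
    using card_triangle_sets_at_rotate_le[OF nc'] N unfolding s'_def by simp
  also have "rotate N s' ` rotate N s ` T = T" using rotate_inverse_image[OF nc s] unfolding s'_def .
  also have "rotate_vertex N s' (rotate_vertex N s w) = w"
    using rotate_vertex_inverse[OF \<open>w < N\<close> s] unfolding s'_def .
  finally show ?thesis
    using le N unfolding quiddity_def card_triangles_eq_card_triangle_sets_at[OF nc]
      card_triangles_eq_card_triangle_sets_at[OF nc'] nat_mod_add_eq_rotate_vertex[OF N] w_def[symmetric]
    by simp
qed

lemma rotate_invariant_iff_has_period:
  assumes tri: "triangulation N T" and s: "s < N"
  shows "rotate N s ` T = T \<longleftrightarrow> has_period (quiddity N T) s"
  unfolding has_period_def
proof
  assume "rotate N s ` T = T"
  then show "\<forall>i. quiddity N T (i + int s) = quiddity N T i" using quiddity_rotate[OF tri s] by simp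
next
  assume periodic: "\<forall>i. quiddity N T (i + int s) = quiddity N T i"
  have "card (triangles_at {0..<N} (rotate N s ` T) w) = card (triangles_at {0..<N} T w)"
    if "w < N" for w
  proof -
    have "quiddity N (rotate N s ` T) (int w) = quiddity N T (int w)"
      using quiddity_rotate[OF tri s, of "int w - int s"] periodic[rule_format, of "int w - int s"] by simp
    then show ?thesis using that by (simp add: quiddity_eq_card_triangles_at nat_mod_as_int)
  qed
  then show "rotate N s ` T = T"
    using polygon_triangulation_eqI triangulation_rotate[OF tri s] tri
    unfolding polygon_triangulation_iff_triangulation[symmetric] by simp
qed

section \<open>The first two rows of the frieze\<close>

definition solves_frieze_rec :: "(int \<Rightarrow> int) \<Rightarrow> (nat \<Rightarrow> int) \<Rightarrow> bool" where
  "solves_frieze_rec a z \<longleftrightarrow> (\<forall>n. z (Suc (Suc n)) = a (int n + 1) * z (Suc n) - z n)"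

text \<open>The row F_T(1, n), extended by the tame value F_T(1, 0) = -1; it is a second solution of
  the recurrence satisfied by the row F_T(0, n).\<close>
definition second_row :: "(int \<Rightarrow> int) \<Rightarrow> nat \<Rightarrow> int" where
  "second_row a n = (if n = 0 then -1 else FT_aux a 1 (n - 1))"

lemma solves_frieze_rec_FT_aux: "solves_frieze_rec a (FT_aux a 0)"
  by (simp add: solves_frieze_rec_def)

lemma solves_frieze_rec_second_row: "solves_frieze_rec a (second_row a)"
  unfolding solves_frieze_rec_def
proof
  fix n show "second_row a (Suc (Suc n)) = a (int n + 1) * second_row a (Suc n) - second_row a n"
    by (cases n) (auto simp: second_row_def add.commute add.left_commute)
qed

lemma solves_frieze_rec_expand:
  assumes "solves_frieze_rec a z"
  shows "z n = z 1 * FT_aux a 0 n - z 0 * second_row a n"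
proof -
  have "z n = z 1 * FT_aux a 0 n - z 0 * second_row a n \<and>
    z (Suc n) = z 1 * FT_aux a 0 (Suc n) - z 0 * second_row a (Suc n)"
  proof (induction n)
    case (Suc n)
    have "z (Suc (Suc n)) = a (int n + 1) * z (Suc n) - z n"
      using assms by (simp add: solves_frieze_rec_def)
    moreover have "second_row a (Suc (Suc n)) = a (int n + 1) * second_row a (Suc n) - second_row a n"
      using solves_frieze_rec_second_row by (simp add: solves_frieze_rec_def)
    moreover have "FT_aux a 0 (Suc (Suc n)) = a (int n + 1) * FT_aux a 0 (Suc n) - FT_aux a 0 n"
      by simp
    ultimately show ?case using Suc by algebra
  qed (simp add: second_row_def)
  then show ?thesis by simp
qed

lemma FT_aux_second_row_wronskian:
  "FT_aux a 0 (Suc n) * second_row a n - FT_aux a 0 n * second_row a (Suc n) = -1"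
proof (induction n)
  case (Suc n)
  have "second_row a (Suc (Suc n)) = a (int n + 1) * second_row a (Suc n) - second_row a n"
    using solves_frieze_rec_second_row by (simp add: solves_frieze_rec_def)
  moreover have "FT_aux a 0 (Suc (Suc n)) = a (int n + 1) * FT_aux a 0 (Suc n) - FT_aux a 0 n"
    by simp
  ultimately show ?case using Suc by algebra
qed (simp add: second_row_def)

lemma solves_frieze_rec_shift:
  assumes "has_period a p" "solves_frieze_rec a z"
  shows "solves_frieze_rec a (\<lambda>n. z (n + p))"
  unfolding solves_frieze_rec_def
proof
  fix n
  have "z (Suc (Suc (n + p))) = a (int (n + p) + 1) * z (Suc (n + p)) - z (n + p)"
    using assms(2) by (simp add: solves_frieze_rec_def)
  moreover have "a (int (n + p) + 1) = a (int n + 1)"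
    using assms(1) unfolding has_period_def by (metis add.commute add.left_commute of_nat_add)
  ultimately show "z (Suc (Suc n) + p) = a (int n + 1) * z (Suc n + p) - z (n + p)" by simp
qed

text \<open>Shifting by a period is a linear map on the two-dimensional solution space with determinant 1
  (the Wronskian) and trace t = F_T(0, p + 1) - F_T(1, p); by Cayley-Hamilton, sampling along the
  period satisfies the recurrence with constant coefficient t.\<close>
lemma FT_aux_period_recurrence:
  assumes per: "has_period a p"
  defines "t \<equiv> FT_aux a 0 (p + 1) - second_row a p"
  shows "FT_aux a 0 (n + 2 * p) = t * FT_aux a 0 (n + p) - FT_aux a 0 n"
proof -
  define x where "x = FT_aux a 0"
  define y where "y = second_row a"
  have x_shift: "x (n + p) = x (Suc p) * x n - x p * y n" for n
    using solves_frieze_rec_expand[OF solves_frieze_rec_shift[OF per solves_frieze_rec_FT_aux]]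
    unfolding x_def y_def by simp
  have y_shift: "y (n + p) = y (Suc p) * x n - y p * y n" for n
    using solves_frieze_rec_expand[OF solves_frieze_rec_shift[OF per solves_frieze_rec_second_row]]
    unfolding x_def y_def by simp
  have w: "x (Suc p) * y p - x p * y (Suc p) = -1"
    using FT_aux_second_row_wronskian unfolding x_def y_def .
  have "x (n + 2 * p) = x (Suc p) * x (n + p) - x p * y (n + p)"
    using x_shift[of "n + p"] by (simp add: mult_2 add.assoc)
  also have "\<dots> = (x (Suc p) - y p) * x (n + p) - x n"
    using x_shift[of n] y_shift[of n] w by algebra
  finally show ?thesis unfolding t_def x_def y_def by simp
qed

text \<open>If t \<ge> 2 the sequence is convex and increasing from c 0 = 0, so it cannot vanish again.\<close>
lemma positive_between_zeros_cases:
  fixes c :: "nat \<Rightarrow> int" and t :: int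
  assumes rec: "\<And>j. c (j + 2) = t * c (j + 1) - c j" and c0: "c 0 = 0" and cm: "c m = 0"
    and pos: "\<And>j. 0 < j \<Longrightarrow> j < m \<Longrightarrow> 0 < c j" and m2: "2 \<le> m"
  shows "m = 2 \<and> t = 0 \<or> m = 3 \<and> t = 1"
proof -
  have c1: "0 < c 1" using pos m2 by simp
  have c2: "c 2 = t * c 1" using rec[of 0] c0 by (simp add: numeral_2_eq_2)
  have c3: "c 3 = (t * t - 1) * c 1"
    using rec[of 1] c2 by (simp add: algebra_simps numeral_3_eq_3 numeral_2_eq_2)
  consider "m = 2" | "m = 3" | "4 \<le> m" using m2 by linarith
  then show ?thesis
  proof cases
    case 1
    then show ?thesis using cm c2 c1 by simp
  next
    case 2
    have "0 < t" using pos[of 2] 2 c2 c1 by (simp add: zero_less_mult_iff)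
    moreover have "t * t = 1" using cm c3 c1 2 by simp
    ultimately have "t = 1" using pos_zmult_eq_1_iff by blast
    then show ?thesis using 2 by simp
  next
    case 3
    have "0 < t" using pos[of 2] 3 c2 c1 by (simp add: zero_less_mult_iff)
    moreover have "t * t \<noteq> 1" using pos[of 3] 3 c3 c1 by auto
    moreover have "t \<noteq> 1" using \<open>t * t \<noteq> 1\<close> by auto
    ultimately have t2: "2 \<le> t" by linarith
    have "int j * c 1 \<le> c j \<and> c 1 \<le> c (j + 1) - c j" for j
    proof (induction j)
      case (Suc j)
      have "int (Suc j) * c 1 \<le> c (Suc j)" using Suc by (simp add: algebra_simps)
      moreover have "0 \<le> int (Suc j) * c 1" using c1 by simp
      ultimately have "0 \<le> (t - 2) * c (Suc j)" using t2 by simp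
      then show ?case using Suc rec[of j] by (simp add: algebra_simps)
    qed (simp add: c0)
    then have "int m * c 1 \<le> c m" by blast
    moreover have "0 < int m * c 1" using c1 m2 by simp
    ultimately show ?thesis using cm by simp
  qed
qed

lemma frieze_first_rows:
  assumes fr: "frieze_pattern N F" and eq: "\<forall>i j. i \<le> j \<and> j \<le> i + int N \<longrightarrow> F i j = FT N T i j"
    and N: "0 < N"
  shows "\<And>n. 0 < n \<Longrightarrow> n < N \<Longrightarrow> 0 < FT_aux (quiddity N T) 0 n"
    and "FT_aux (quiddity N T) 0 N = 0"
    and "FT_aux (quiddity N T) 0 (N - 1) = 1"
    and "second_row (quiddity N T) N = 1"
proof -
  have row0: "F 0 (int n) = FT_aux (quiddity N T) 0 n" if "n \<le> N" for n
    using eq that by (simp add: FT_def)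
  have row1: "F 1 (int N) = second_row (quiddity N T) N"
    using eq N by (simp add: FT_def second_row_def nat_diff_distrib)
  have boundary: "F 0 (int N) = 0" "F 0 (int N - 1) = 1" "F 1 (int N) = 1"
    using fr unfolding frieze_pattern_def by (metis add.commute add_0 add_diff_cancel_left')+
  show "\<And>n. 0 < n \<Longrightarrow> n < N \<Longrightarrow> 0 < FT_aux (quiddity N T) 0 n"
    using fr row0 unfolding frieze_pattern_def
    by (metis diff_zero less_imp_le of_nat_0_less_iff of_nat_less_iff)
  show "FT_aux (quiddity N T) 0 N = 0" using row0 boundary by simp
  show "FT_aux (quiddity N T) 0 (N - 1) = 1" using row0[of "N - 1"] boundary N by (simp add: of_nat_diff)
  show "second_row (quiddity N T) N = 1" using row1 boundary by simp
qed

section \<open>The principal growth coefficient\<close>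

lemma pgc_eq_trace:
  assumes "0 < min_period (quiddity N T)"
  shows "pgc N T = FT_aux (quiddity N T) 0 (min_period (quiddity N T) + 1)
    - second_row (quiddity N T) (min_period (quiddity N T))"
  using assms by (simp add: pgc_def FT_def second_row_def nat_diff_distrib nat_add_distrib)

lemma pgc_eq_minus_two:
  assumes fr: "frieze_pattern N F" and eq: "\<forall>i j. i \<le> j \<and> j \<le> i + int N \<longrightarrow> F i j = FT N T i j"
    and N: "0 < N" and p: "min_period (quiddity N T) = N"
  shows "pgc N T = -2"
proof -
  define a where "a = quiddity N T"
  define x where "x = FT_aux a 0"
  note rows = frieze_first_rows[OF fr eq N, folded a_def x_def]
  have "x (Suc (Suc (N - 1))) = a (int (N - 1) + 1) * x (Suc (N - 1)) - x (N - 1)"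
    unfolding x_def by simp
  moreover have "Suc (Suc (N - 1)) = N + 1" "Suc (N - 1) = N" using N by auto
  ultimately have "x (N + 1) = -1" using rows by simp
  then show ?thesis using pgc_eq_trace[of N T] p N rows unfolding a_def x_def by simp
qed

lemma pgc_cases:
  assumes fr: "frieze_pattern N F" and tri: "triangulation N T"
    and eq: "\<forall>i j. i \<le> j \<and> j \<le> i + int N \<longrightarrow> F i j = FT N T i j"
  defines "m \<equiv> N div min_period (quiddity N T)"
  shows "m = 1 \<and> pgc N T = -2 \<or> m = 2 \<and> pgc N T = 0 \<or> m = 3 \<and> pgc N T = 1"
proof -
  define a where "a = quiddity N T"
  define p where "p = min_period a"
  define c where "c j = FT_aux a 0 (j * p)" for j
  have N: "0 < N" using tri by (simp add: triangulation_def)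
  have per_N: "has_period a N" using has_period_quiddity[OF N] unfolding a_def .
  have p: "0 < p" "has_period a p" using min_period[OF per_N N] unfolding p_def by auto
  have "p dvd N" using has_period_iff_min_period_dvd[OF per_N N] per_N unfolding p_def by simp
  then have Nmp: "N = m * p" unfolding m_def p_def a_def by simp
  note rows = frieze_first_rows[OF fr eq N, folded a_def]
  have rec: "c (j + 2) = pgc N T * c (j + 1) - c j" for j
  proof -
    have "FT_aux a 0 (j * p + 2 * p) = pgc N T * FT_aux a 0 (j * p + p) - FT_aux a 0 (j * p)"
      using FT_aux_period_recurrence[OF p(2), of "j * p"] pgc_eq_trace[of N T] p(1)
      unfolding a_def p_def by simp
    moreover have "(j + 2) * p = j * p + 2 * p" "(j + 1) * p = j * p + p"
      by (simp_all add: algebra_simps)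
    ultimately show ?thesis unfolding c_def by (simp only:)
  qed
  have c0: "c 0 = 0" and cm: "c m = 0" using rows Nmp unfolding c_def by simp_all
  have pos: "0 < c j" if "0 < j" "j < m" for j
    using rows(1) that p(1) Nmp unfolding c_def by simp
  have "m \<noteq> 0" using N Nmp by auto
  then consider "m = 1" | "2 \<le> m" by linarith
  then show ?thesis
  proof cases
    case 1
    then show ?thesis using pgc_eq_minus_two[OF fr eq N] Nmp unfolding p_def a_def by simp
  next
    case 2
    then show ?thesis using positive_between_zeros_cases[OF rec c0 cm pos] by blast
  qed
qed

lemma kfold_symmetry_iff_dvd:
  assumes tri: "triangulation N T" and k: "2 \<le> k"
  shows "has_kfold_symmetry N T k \<longleftrightarrow> k dvd N div min_period (quiddity N T)"
proof -
  define a where "a = quiddity N T"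
  define p where "p = min_period a"
  have N: "0 < N" using tri by (simp add: triangulation_def)
  have per_N: "has_period a N" using N has_period_quiddity unfolding a_def by simp
  have p: "0 < p" "p dvd N"
    using min_period[OF per_N N] has_period_iff_min_period_dvd[OF per_N N] per_N unfolding p_def by auto
  have "has_kfold_symmetry N T k \<longleftrightarrow> k dvd N \<and> has_period a (N div k)"
    unfolding has_kfold_symmetry_def a_def
    using rotate_invariant_iff_has_period[OF tri, of "N div k"] N k by auto
  also have "\<dots> \<longleftrightarrow> k dvd N \<and> p dvd N div k"
    using has_period_iff_min_period_dvd[OF per_N N] unfolding p_def by simp
  also have "\<dots> \<longleftrightarrow> k * p dvd N"
  proof
    assume "k dvd N \<and> p dvd N div k"
    then show "k * p dvd N" using dvd_div_iff_mult[of k N p] k by (simp add: mult.commute)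
  next
    assume kp: "k * p dvd N"
    then have "k dvd N" using dvd_mult_left by blast
    then show "k dvd N \<and> p dvd N div k" using dvd_div_iff_mult[of k N p] kp k by (simp add: mult.commute)
  qed
  also have "\<dots> \<longleftrightarrow> k dvd N div p"
    using dvd_div_iff_mult[of p N k] p by simp
  finally show ?thesis unfolding a_def p_def .
qed

theorem proposition4p26:
  fixes N :: nat and F :: "int \<Rightarrow> int \<Rightarrow> int" and T :: "(nat \<times> nat) set"
  assumes "frieze_pattern N F"
    and "triangulation N T"
    and "\<forall>i j. i \<le> j \<and> j \<le> i + int N \<longrightarrow> F i j = FT N T i j"
  shows "(pgc N T = -2 \<longleftrightarrow> \<not> (\<exists>k\<ge>2. has_kfold_symmetry N T k))
       \<and> (pgc N T = 0 \<longleftrightarrow> has_kfold_symmetry N T 2)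
       \<and> (pgc N T = 1 \<longleftrightarrow> has_kfold_symmetry N T 3)"
proof -
  define m where "m = N div min_period (quiddity N T)"
  have cases: "m = 1 \<and> pgc N T = -2 \<or> m = 2 \<and> pgc N T = 0 \<or> m = 3 \<and> pgc N T = 1"
    using pgc_cases[OF assms] unfolding m_def .
  have sym: "has_kfold_symmetry N T k \<longleftrightarrow> k dvd m" if "2 \<le> k" for k
    using kfold_symmetry_iff_dvd[OF assms(2) that] unfolding m_def .
  have "(\<exists>k\<ge>2. has_kfold_symmetry N T k) \<longleftrightarrow> m \<noteq> 1"
  proof
    assume "\<exists>k\<ge>2. has_kfold_symmetry N T k"
    then show "m \<noteq> 1" using sym by fastforce
  next
    assume "m \<noteq> 1"
    then have "2 \<le> m" using cases by auto
    then show "\<exists>k\<ge>2. has_kfold_symmetry N T k" using sym[of m] by auto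
  qed
  then show ?thesis using cases sym[of 2] sym[of 3] by auto
qed

end
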